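(* Let $\sigma$ be a finite relational signature, $\mathcal{A}$ a finite $\sigma$-structure, and $\varphi=\forall x^1,\dots,x^m\,\exists \bar y\; P(x^1,\dots,x^m,\bar y)$ a sentence where $P$ is a conjunction of atomic $\sigma$-formulas. Then $\mathcal{A}\models\varphi$ if and only if there is a homomorphism of $\sigma\cup C_m$-structures from $\mathfrak{D}_\varphi$ to $\mathfrak{A}^{|A|^m}$.
   Context: $C_m=\{c_1,\dots,c_m\}$ is a set of new constant symbols; a homomorphism of $\sigma\cup C_m$-structures preserves all relations of $\sigma$ and maps the interpretation of each $c_i$ to the interpretation of $c_i$. $\mathfrak{D}_\varphi$ is the $\sigma\cup C_m$-structure whose domain is the set of variables of $\varphi$, whose relation tuples are exactly the atoms of $P$, and in which $c_i$ is interpreted by $x^i$. For a map $\lambda:\{1,\dots,m\}\to A$, $\mathfrak{A}_\lambda$ is the expansion of $\mathcal{A}$ interpreting $c_i$ by $\lambda(i)$. The "Superprodukt" $\mathfrak{A}^{|A|^m}$ is the direct product $\bigotimes_{\lambda\in A^{\{1,\dots,m\}}}\mathfrak{A}_\lambda$: domain $A^{A^{\{1,\dots,m\}}}$, relations holding coordinatewise, and $c_i$ interpreted by the tuple whose $\lambda$-coordinate is $\lambda(i)$. *)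

theory Defs
  imports "HOL-Library.FuncSet"
begin

text \<open>A (sigma \<union> C_m)-structure
additionally carries c :: nat \<Rightarrow> 'a, where c i interprets the constant c_(i+1), i < m
(constants are indexed 0..m-1).\<close>

definition is_structure :: "'r set \<Rightarrow> ('r \<Rightarrow> nat) \<Rightarrow> 'a set \<Rightarrow> ('r \<Rightarrow> 'a list set) \<Rightarrow> bool" where
  "is_structure sig ar A I \<longleftrightarrow> A \<noteq> {} \<and>
     (\<forall>R\<in>sig. \<forall>t\<in>I R. length t = ar R \<and> set t \<subseteq> A)"

definition is_hom_C ::
  "'r set \<Rightarrow> nat \<Rightarrow> 'a set \<Rightarrow> ('r \<Rightarrow> 'a list set) \<Rightarrow> (nat \<Rightarrow> 'a)
     \<Rightarrow> 'b set \<Rightarrow> ('r \<Rightarrow> 'b list set) \<Rightarrow> (nat \<Rightarrow> 'b) \<Rightarrow> ('a \<Rightarrow> 'b) \<Rightarrow> bool" where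
  "is_hom_C sig m A I c B J d h \<longleftrightarrow>
     (\<forall>x\<in>A. h x \<in> B) \<and>
     (\<forall>R\<in>sig. \<forall>t\<in>I R. map h t \<in> J R) \<and>
     (\<forall>i<m. h (c i) = d i)"

text \<open>A sentence forall x^1..x^m exists ybar. P, with P a conjunction of relational atoms, is
represented by the list xs of universally quantified variables (x^(i+1) = xs ! i), the list
ys of existentially quantified variables and the list of atoms of P, each atom being a
relation symbol together with the tuple of variables it is applied to.\<close>

definition well_formed_sentence ::
  "'r set \<Rightarrow> ('r \<Rightarrow> nat) \<Rightarrow> 'v list \<Rightarrow> 'v list \<Rightarrow> ('r \<times> 'v list) list \<Rightarrow> bool" where
  "well_formed_sentence sig ar xs ys atoms \<longleftrightarrow>
     distinct xs \<and> distinct ys \<and> set xs \<inter> set ys = {} \<and>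
     (\<forall>(R, vs)\<in>set atoms. R \<in> sig \<and> length vs = ar R \<and> set vs \<subseteq> set xs \<union> set ys)"

definition sat_sentence ::
  "'a set \<Rightarrow> ('r \<Rightarrow> 'a list set) \<Rightarrow> 'v list \<Rightarrow> 'v list \<Rightarrow> ('r \<times> 'v list) list \<Rightarrow> bool" where
  "sat_sentence A I xs ys atoms \<longleftrightarrow>
     (\<forall>a. (\<forall>i<length xs. a i \<in> A) \<longrightarrow>
        (\<exists>s :: 'v \<Rightarrow> 'a. (\<forall>i<length xs. s (xs ! i) = a i) \<and> (\<forall>y\<in>set ys. s y \<in> A) \<and>
            (\<forall>(R, vs)\<in>set atoms. map s vs \<in> I R)))"

text \<open>The canonical structure D_phi: domain the variables of phi, relation tuples exactly
the atoms of P, constant c_(i+1) interpreted by x^(i+1).\<close>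
definition D_dom :: "'v list \<Rightarrow> 'v list \<Rightarrow> 'v set" where
  "D_dom xs ys = set xs \<union> set ys"

definition D_rel :: "('r \<times> 'v list) list \<Rightarrow> 'r \<Rightarrow> 'v list set" where
  "D_rel atoms R = {vs. (R, vs) \<in> set atoms}"

definition D_const :: "'v list \<Rightarrow> nat \<Rightarrow> 'v" where
  "D_const xs i = xs ! i"

text \<open>The Superprodukt A^(|A|^m): product over all lambda : {0..<m} \<rightarrow> A of the expansions A_lambda.
Elements are (extensional) functions from the index set to A.\<close>
definition Lam :: "nat \<Rightarrow> 'a set \<Rightarrow> (nat \<Rightarrow> 'a) set" where
  "Lam m A = PiE {..<m} (\<lambda>_. A)"

definition SP_dom :: "nat \<Rightarrow> 'a set \<Rightarrow> ((nat \<Rightarrow> 'a) \<Rightarrow> 'a) set" where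
  "SP_dom m A = PiE (Lam m A) (\<lambda>_. A)"

definition SP_rel :: "('r \<Rightarrow> nat) \<Rightarrow> nat \<Rightarrow> 'a set \<Rightarrow> ('r \<Rightarrow> 'a list set)
    \<Rightarrow> 'r \<Rightarrow> ((nat \<Rightarrow> 'a) \<Rightarrow> 'a) list set" where
  "SP_rel ar m A I R = {ts. length ts = ar R \<and> set ts \<subseteq> SP_dom m A \<and>
       (\<forall>lam\<in>Lam m A. map (\<lambda>t. t lam) ts \<in> I R)}"

definition SP_const :: "nat \<Rightarrow> 'a set \<Rightarrow> nat \<Rightarrow> ((nat \<Rightarrow> 'a) \<Rightarrow> 'a)" where
  "SP_const m A i = (\<lambda>lam\<in>Lam m A. lam i)"

end

theory Submission
  imports Defs
begin

text \<open>A map into a direct product is a homomorphism iff all its coordinates are, so a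
homomorphism from \<open>\<D>\<^sub>\<phi>\<close> into the Superprodukt amounts to one homomorphism
\<open>\<D>\<^sub>\<phi> \<rightarrow> \<A>\<^sub>\<lambda>\<close> for every \<open>\<lambda>\<close>. Such a homomorphism is precisely an
assignment of the variables that sends each \<open>x\<^sup>i\<close> to \<open>\<lambda>(i)\<close> and makes every atom of
\<open>P\<close> true, i.e. a witness for the existential part of \<open>\<phi>\<close> at the values \<open>\<lambda>\<close> of the
universal variables.\<close>

lemma is_hom_C_SP_project:
  assumes "is_hom_C sig m B J c (SP_dom m A) (SP_rel ar m A I) (SP_const m A) h"
    and "lam \<in> Lam m A"
  shows "is_hom_C sig m B J c A I lam (\<lambda>x. h x lam)"
  unfolding is_hom_C_def
proof (intro conjI ballI allI impI)
  fix x assume "x \<in> B"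
  then show "h x lam \<in> A"
    using assms unfolding is_hom_C_def SP_dom_def by auto
next
  fix R t assume "R \<in> sig" "t \<in> J R"
  then have "map h t \<in> SP_rel ar m A I R"
    using assms(1) unfolding is_hom_C_def by blast
  then show "map (\<lambda>x. h x lam) t \<in> I R"
    using assms(2) unfolding SP_rel_def by (simp add: comp_def)
next
  fix i assume "i < m"
  then show "h (c i) lam = lam i"
    using assms unfolding is_hom_C_def SP_const_def by simp
qed

lemma is_hom_C_SP_tuple:
  assumes arity: "\<forall>R\<in>sig. \<forall>t\<in>J R. length t = ar R \<and> set t \<subseteq> B"
    and homs: "\<And>lam. lam \<in> Lam m A \<Longrightarrow> is_hom_C sig m B J c A I lam (g lam)"
  shows "is_hom_C sig m B J c (SP_dom m A) (SP_rel ar m A I) (SP_const m A)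
           (\<lambda>x. \<lambda>lam\<in>Lam m A. g lam x)"
proof -
  have dom: "(\<lambda>lam\<in>Lam m A. g lam x) \<in> SP_dom m A" if "x \<in> B" for x
    using homs that unfolding is_hom_C_def SP_dom_def by auto
  have rel: "map (\<lambda>x. \<lambda>lam\<in>Lam m A. g lam x) t \<in> SP_rel ar m A I R"
    if "R \<in> sig" "t \<in> J R" for R t
    using that arity dom homs unfolding SP_rel_def is_hom_C_def by (auto simp: comp_def)
  have const: "(\<lambda>lam\<in>Lam m A. g lam (c i)) = SP_const m A i" if "i < m" for i
    using that homs unfolding SP_const_def is_hom_C_def by (auto intro: restrict_ext)
  show ?thesis
    unfolding is_hom_C_def using dom rel const by blast
qed

lemma ex_hom_C_SP_iff:
  assumes "\<forall>R\<in>sig. \<forall>t\<in>J R. length t = ar R \<and> set t \<subseteq> B"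
  shows "(\<exists>h. is_hom_C sig m B J c (SP_dom m A) (SP_rel ar m A I) (SP_const m A) h)
     \<longleftrightarrow> (\<forall>lam\<in>Lam m A. \<exists>g. is_hom_C sig m B J c A I lam g)"
proof
  assume "\<exists>h. is_hom_C sig m B J c (SP_dom m A) (SP_rel ar m A I) (SP_const m A) h"
  then show "\<forall>lam\<in>Lam m A. \<exists>g. is_hom_C sig m B J c A I lam g"
    using is_hom_C_SP_project by blast
next
  assume "\<forall>lam\<in>Lam m A. \<exists>g. is_hom_C sig m B J c A I lam g"
  then obtain g where "\<And>lam. lam \<in> Lam m A \<Longrightarrow> is_hom_C sig m B J c A I lam (g lam)"
    by metis
  then show "\<exists>h. is_hom_C sig m B J c (SP_dom m A) (SP_rel ar m A I) (SP_const m A) h"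
    using is_hom_C_SP_tuple[OF assms] by blast
qed

definition witnesses ::
  "'a set \<Rightarrow> ('r \<Rightarrow> 'a list set) \<Rightarrow> 'v list \<Rightarrow> 'v list \<Rightarrow> ('r \<times> 'v list) list
     \<Rightarrow> (nat \<Rightarrow> 'a) \<Rightarrow> ('v \<Rightarrow> 'a) \<Rightarrow> bool" where
  "witnesses A I xs ys atoms a s \<longleftrightarrow>
     (\<forall>i<length xs. s (xs ! i) = a i) \<and> (\<forall>y\<in>set ys. s y \<in> A) \<and>
     (\<forall>(R, vs)\<in>set atoms. map s vs \<in> I R)"

lemma sat_sentence_iff_witnesses:
  "sat_sentence A I xs ys atoms \<longleftrightarrow>
     (\<forall>a. (\<forall>i<length xs. a i \<in> A) \<longrightarrow> (\<exists>s. witnesses A I xs ys atoms a s))"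
  unfolding sat_sentence_def witnesses_def ..

lemma is_hom_C_D_iff_witnesses:
  assumes "well_formed_sentence sig ar xs ys atoms"
    and a: "\<forall>i<length xs. a i \<in> A"
  shows "is_hom_C sig (length xs) (D_dom xs ys) (D_rel atoms) (D_const xs) A I a s
     \<longleftrightarrow> witnesses A I xs ys atoms a s"
proof -
  have sig: "R \<in> sig" if "(R, vs) \<in> set atoms" for R vs
    using assms(1) that unfolding well_formed_sentence_def by auto
  have "s x \<in> A" if "witnesses A I xs ys atoms a s" "x \<in> set xs" for x
    using that a by (auto simp: witnesses_def in_set_conv_nth)
  then show ?thesis
    using sig unfolding is_hom_C_def witnesses_def D_dom_def D_rel_def D_const_def
    by fastforce
qed

lemma sat_sentence_iff_ex_hom_C_D:
  assumes "well_formed_sentence sig ar xs ys atoms"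
  shows "sat_sentence A I xs ys atoms \<longleftrightarrow>
    (\<forall>lam\<in>Lam (length xs) A.
       \<exists>g. is_hom_C sig (length xs) (D_dom xs ys) (D_rel atoms) (D_const xs) A I lam g)"
proof -
  let ?m = "length xs"
  have Lam_values: "\<forall>i<?m. lam i \<in> A" if "lam \<in> Lam ?m A" for lam
    using that unfolding Lam_def by auto
  have restrict_witnesses: "witnesses A I xs ys atoms (restrict a {..<?m}) s
      \<longleftrightarrow> witnesses A I xs ys atoms a s" for a s
    unfolding witnesses_def by simp
  have "sat_sentence A I xs ys atoms \<longleftrightarrow>
      (\<forall>lam\<in>Lam ?m A. \<exists>s. witnesses A I xs ys atoms lam s)"
  proof
    assume "sat_sentence A I xs ys atoms"
    then show "\<forall>lam\<in>Lam ?m A. \<exists>s. witnesses A I xs ys atoms lam s"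
      using Lam_values unfolding sat_sentence_iff_witnesses by blast
  next
    assume all: "\<forall>lam\<in>Lam ?m A. \<exists>s. witnesses A I xs ys atoms lam s"
    have "\<exists>s. witnesses A I xs ys atoms a s" if "\<forall>i<?m. a i \<in> A" for a
    proof -
      have "restrict a {..<?m} \<in> Lam ?m A"
        using that unfolding Lam_def by auto
      then show ?thesis
        using all restrict_witnesses by blast
    qed
    then show "sat_sentence A I xs ys atoms"
      unfolding sat_sentence_iff_witnesses by blast
  qed
  also have "\<dots> \<longleftrightarrow> (\<forall>lam\<in>Lam ?m A.
      \<exists>g. is_hom_C sig ?m (D_dom xs ys) (D_rel atoms) (D_const xs) A I lam g)"
    using is_hom_C_D_iff_witnesses[OF assms Lam_values] by blast
  finally show ?thesis .
qed

theorem mainTheorem5: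
  fixes sig :: "'r set" and ar :: "'r \<Rightarrow> nat"
    and A :: "'a set" and I :: "'r \<Rightarrow> 'a list set"
    and xs ys :: "'v list" and atoms :: "('r \<times> 'v list) list"
  assumes "finite sig"
    and "is_structure sig ar A I"
    and "finite A"
    and "well_formed_sentence sig ar xs ys atoms"
  shows "sat_sentence A I xs ys atoms \<longleftrightarrow>
    (\<exists>h. is_hom_C sig (length xs)
            (D_dom xs ys) (D_rel atoms) (D_const xs)
            (SP_dom (length xs) A) (SP_rel ar (length xs) A I) (SP_const (length xs) A) h)"
proof -
  have D_arity: "\<forall>R\<in>sig. \<forall>t\<in>D_rel atoms R. length t = ar R \<and> set t \<subseteq> D_dom xs ys"
    using assms(4) unfolding well_formed_sentence_def D_rel_def D_dom_def by auto
  show ?thesis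
    unfolding sat_sentence_iff_ex_hom_C_D[OF assms(4)] ex_hom_C_SP_iff[OF D_arity] ..
qed

end
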